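(* Let $d\ge1$ and $\lambda=(\lambda_1,\dots,\lambda_d)$ a vector of positive integers with $\sum_t\lambda_t=n\ge2$. For distinct $i,j\in\{0,\dots,n-2\}$, we have $i\preceq j$ in $P(\lambda)$ if and only if $i<j$ and for every $t\in\{1,\dots,d\}$, \[ \frac{s_{t,i}+s_{t,j-i}-s_{t,j}}{n-1}=\left\lceil \frac{s_{t,i}}{n-1}\right\rceil + \left\lceil \frac{s_{t,j-i}}{n-1}\right\rceil - \left\lceil \frac{s_{t,j}}{n-1}\right\rceil . \]
   Context: $\Delta_\lambda=\mathrm{conv}(e_1,\dots,e_d,\lambda)\subset\mathbb{R}^d$, with fundamental parallelepiped $\Pi_\lambda=\{\sum_{i=1}^d\gamma_i(1,e_i)+\gamma_{d+1}(1,\lambda):0\le\gamma_i<1\}\subset\mathbb{R}^{d+1}$. $P(\lambda)$ is $\Pi_\lambda\cap\mathbb{Z}^{d+1}$ ordered by $\sigma\preceq\mu$ iff $\mu-\sigma\in\Pi_\lambda\cap\mathbb{Z}^{d+1}$. For $0\le b<n-1$ set $p(b)=\left(\sum_{t}\lceil b\lambda_t/(n-1)\rceil-b,\ \lceil b\lambda_1/(n-1)\rceil,\dots,\lceil b\lambda_d/(n-1)\rceil\right)$; $b\mapsto p(b)$ is a bijection from $\{0,\dots,n-2\}$ onto $\Pi_\lambda\cap\mathbb{Z}^{d+1}$ and each integer $b$ is identified with $p(b)$. For $0\le i<n-1$ and $1\le t\le d$, the integers $r_{t,i}\ge0$ and $0\le s_{t,i}<n-1$ are defined by $i\lambda_t=r_{t,i}(n-1)+s_{t,i}$.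 *)

theory Defs
  imports Complex_Main
begin

text \<open>The vector lambda = (lambda_1,...,lambda_d) is a list lam of length d, with
  lambda_t = lam ! (t-1). Points of R^(d+1) with integer coordinates are int lists of
  length d+1; coordinate 0 is the first (extra) coordinate.\<close>

text \<open>Membership of an integer point in the fundamental parallelepiped Pi_lambda.
  gamma k for k < d is the coefficient of (1,e_(k+1)); gamma d that of (1,lambda).\<close>
definition in_Pi :: "nat list \<Rightarrow> int list \<Rightarrow> bool" where
  "in_Pi lam x \<longleftrightarrow> length x = Suc (length lam) \<and>
     (\<exists>\<gamma>::nat \<Rightarrow> real. (\<forall>k\<le>length lam. 0 \<le> \<gamma> k \<and> \<gamma> k < 1) \<and>
        real_of_int (x ! 0) = (\<Sum>k\<le>length lam. \<gamma> k) \<and>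
        (\<forall>t<length lam. real_of_int (x ! Suc t) = \<gamma> t + \<gamma> (length lam) * real (lam ! t)))"

definition P_le :: "nat list \<Rightarrow> int list \<Rightarrow> int list \<Rightarrow> bool" where
  "P_le lam \<sigma> \<mu> \<longleftrightarrow> in_Pi lam \<sigma> \<and> in_Pi lam \<mu> \<and> in_Pi lam (map2 (-) \<mu> \<sigma>)"

definition pt :: "nat list \<Rightarrow> nat \<Rightarrow> int list" where
  "pt lam b = (let n = sum_list lam in
     ((\<Sum>l\<leftarrow>lam. \<lceil>real (b * l) / real (n - 1)\<rceil>) - int b)
     # map (\<lambda>l. \<lceil>real (b * l) / real (n - 1)\<rceil>) lam)"

text \<open>s_{t,i} (with t 0-indexed): i * lambda_t = r (n-1) + s, 0 <= s < n-1.\<close>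
definition s_coef :: "nat list \<Rightarrow> nat \<Rightarrow> nat \<Rightarrow> nat" where
  "s_coef lam t i = (i * (lam ! t)) mod (sum_list lam - 1)"

end

theory Submission
  imports Defs
begin

text \<open>
  An integer point x = \<Sum>k \<gamma>(k) (1, e(k)) + \<gamma>(d+1) (1, \<lambda>) of \<Pi>(\<lambda>) determines
  b = x(1) + ... + x(d) - x(0) = (n - 1) \<gamma>(d+1), an integer in [0, n - 1), and then
  x(t) = \<gamma>(t) + b \<lambda>(t) / (n - 1) with 0 \<le> \<gamma>(t) < 1 forces x(t) = \<lceil>b \<lambda>(t) / (n - 1)\<rceil>,
  so x = p(b). Since b is additive, p(j) - p(i) lies in \<Pi>(\<lambda>) iff i \<le> j and
  p(j) - p(i) = p(j - i), i.e.
  \<lceil>i \<lambda>(t) / (n - 1)\<rceil> + \<lceil>(j - i) \<lambda>(t) / (n - 1)\<rceil> = \<lceil>j \<lambda>(t) / (n - 1)\<rceil> for all t.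
  Splitting each ceiling as \<lceil>y\<rceil> = \<lfloor>y\<rfloor> + \<lceil>frac y\<rceil> turns this into the stated identity
  between the remainders s(t, i) = (n - 1) frac (i \<lambda>(t) / (n - 1)).
\<close>

lemma ceiling_eq_floor_add_ceiling_frac: "\<lceil>x\<rceil> = \<lfloor>x\<rfloor> + \<lceil>frac x\<rceil>"
  for x :: "'a::floor_ceiling"
proof -
  have "x = frac x + of_int \<lfloor>x\<rfloor>" by (simp add: frac_def)
  then show ?thesis by (metis ceiling_add_of_int add.commute)
qed

lemma ceiling_add_eq_iff_frac:
  fixes x y :: "'a::floor_ceiling"
  shows "\<lceil>x\<rceil> + \<lceil>y\<rceil> = \<lceil>x + y\<rceil> \<longleftrightarrow>
    frac x + frac y - frac (x + y) = of_int (\<lceil>frac x\<rceil> + \<lceil>frac y\<rceil> - \<lceil>frac (x + y)\<rceil>)"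
proof -
  have "frac x + frac y - frac (x + y) = of_int (\<lfloor>x + y\<rfloor> - \<lfloor>x\<rfloor> - \<lfloor>y\<rfloor>)"
    by (simp add: frac_def)
  then show ?thesis
    using ceiling_eq_floor_add_ceiling_frac[of x] ceiling_eq_floor_add_ceiling_frac[of y]
      ceiling_eq_floor_add_ceiling_frac[of "x + y"]
    by (simp only: of_int_eq_iff) linarith
qed

lemma frac_of_nat_divide: "0 < N \<Longrightarrow> frac (real a / real N) = real (a mod N) / real N"
proof -
  assume "0 < N"
  have "real a = real (a div N) * real N + real (a mod N)"
    by (metis div_mult_mod_eq of_nat_add of_nat_mult)
  then have "real a / real N = real (a mod N) / real N + of_nat (a div N)"
    using \<open>0 < N\<close> by (simp add: field_simps)
  moreover have "real (a mod N) / real N \<in> {0..<1}"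
    using \<open>0 < N\<close> by simp
  ultimately show ?thesis
    by (metis frac_add_of_int_right frac_eq_id of_int_of_nat_eq)
qed

lemma ceiling_add_eq_iff_mod:
  fixes a b N :: nat
  assumes "0 < N"
  shows "\<lceil>real a / real N\<rceil> + \<lceil>real b / real N\<rceil> = \<lceil>real (a + b) / real N\<rceil> \<longleftrightarrow>
    (real (a mod N) + real (b mod N) - real ((a + b) mod N)) / real N
      = of_int \<lceil>real (a mod N) / real N\<rceil> + of_int \<lceil>real (b mod N) / real N\<rceil>
        - of_int \<lceil>real ((a + b) mod N) / real N\<rceil>"
proof -
  have "real (a + b) / real N = real a / real N + real b / real N"
    by (simp add: add_divide_distrib)
  then show ?thesis
    using ceiling_add_eq_iff_frac[of "real a / real N" "real b / real N"]
      frac_of_nat_divide[OF assms, of a] frac_of_nat_divide[OF assms, of b]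
      frac_of_nat_divide[OF assms, of "a + b"]
    by (simp add: add_divide_distrib diff_divide_distrib)
qed

text \<open>For x in \<Pi>(\<lambda>) this is (n - 1) \<gamma>(d+1); it recovers b from p(b).\<close>

definition pi_index :: "int list \<Rightarrow> int" where
  "pi_index x = sum_list (tl x) - hd x"

lemma pi_index_conv_nth:
  "length x = Suc d \<Longrightarrow> pi_index x = (\<Sum>t<d. x ! Suc t) - x ! 0"
  by (cases x) (simp_all add: pi_index_def sum_list_sum_nth atLeast0LessThan)

lemma in_PiD:
  assumes "2 \<le> sum_list lam" and "in_Pi lam x"
  shows "length x = Suc (length lam) \<and> 0 \<le> pi_index x \<and> pi_index x < int (sum_list lam - 1) \<and>
    (\<forall>t<length lam. x ! Suc t = \<lceil>of_int (pi_index x) * real (lam ! t) / real (sum_list lam - 1)\<rceil>)"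
    (is "?len \<and> 0 \<le> ?g \<and> ?g < ?M \<and> ?coords")
proof -
  define d where "d = length lam"
  define N where "N = real (sum_list lam - 1)"
  have "0 < N" using assms by (simp add: N_def)
  have sum_lam: "(\<Sum>t<d. real (lam ! t)) = N + 1"
    using assms by (simp add: N_def d_def sum_list_sum_nth atLeast0LessThan flip: of_nat_sum)
  obtain \<gamma> :: "nat \<Rightarrow> real" where \<gamma>: "\<forall>k\<le>d. 0 \<le> \<gamma> k \<and> \<gamma> k < 1"
    and x0: "of_int (x ! 0) = (\<Sum>k<d. \<gamma> k) + \<gamma> d"
    and xt: "\<forall>t<d. of_int (x ! Suc t) = \<gamma> t + \<gamma> d * real (lam ! t)"
    and ?len
    using assms(2) unfolding in_Pi_def d_def by (auto simp: lessThan_Suc_atMost[symmetric])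
  have "of_int ?g = (\<Sum>t<d. of_int (x ! Suc t)) - of_int (x ! 0)"
    using \<open>?len\<close> by (simp add: pi_index_conv_nth d_def)
  also have "\<dots> = (\<Sum>t<d. \<gamma> t + \<gamma> d * real (lam ! t)) - ((\<Sum>k<d. \<gamma> k) + \<gamma> d)"
    using xt x0 by simp
  also have "\<dots> = \<gamma> d * N"
    using sum_lam by (simp add: sum.distrib algebra_simps flip: sum_distrib_left)
  finally have g: "of_int ?g = \<gamma> d * N" .
  then have "(0::real) \<le> of_int ?g" "of_int ?g < N"
    using \<gamma> \<open>0 < N\<close> by simp_all
  then have "0 \<le> ?g" "?g < ?M"
    unfolding N_def by (simp, metis of_int_less_iff of_int_of_nat_eq)
  moreover have ?coords
  proof (intro allI impI)
    fix t assume "t < length lam"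
    then have "of_int (x ! Suc t) - of_int ?g * real (lam ! t) / N = \<gamma> t" "0 \<le> \<gamma> t" "\<gamma> t < 1"
      using xt \<gamma> g \<open>0 < N\<close> by (auto simp: d_def)
    then have "\<lceil>of_int ?g * real (lam ! t) / real (sum_list lam - 1)\<rceil> = x ! Suc t"
      unfolding N_def by (intro ceiling_unique) auto
    then show "x ! Suc t = \<lceil>of_int ?g * real (lam ! t) / real (sum_list lam - 1)\<rceil>" ..
  qed
  ultimately show ?thesis
    using \<open>?len\<close> by blast
qed

lemma in_PiI:
  assumes "2 \<le> sum_list lam" and len: "length x = Suc (length lam)"
    and "0 \<le> pi_index x" and "pi_index x < int (sum_list lam - 1)"
    and coords: "\<forall>t<length lam. x ! Suc t = \<lceil>of_int (pi_index x) * real (lam ! t) / real (sum_list lam - 1)\<rceil>"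
  shows "in_Pi lam x"
proof -
  define d where "d = length lam"
  define N where "N = real (sum_list lam - 1)"
  define g where "g = real_of_int (pi_index x)"
  have "0 < N" using assms(1) by (simp add: N_def)
  have sum_lam: "(\<Sum>t<d. real (lam ! t)) = N + 1"
    using assms(1) by (simp add: N_def d_def sum_list_sum_nth atLeast0LessThan flip: of_nat_sum)
  have "0 \<le> g" "g < N"
    using assms(3,4) by (simp_all add: g_def N_def)
  define \<gamma> where "\<gamma> k = (if k < d then of_int (x ! Suc k) - g * real (lam ! k) / N else g / N)" for k
  have "0 \<le> \<gamma> k \<and> \<gamma> k < 1" if "k \<le> d" for k
  proof (cases "k < d")
    case True
    define r where "r = g * real (lam ! k) / N"
    have "\<gamma> k = of_int \<lceil>r\<rceil> - r"
      using coords True by (simp add: \<gamma>_def r_def g_def d_def N_def)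
    then show ?thesis
      using ceiling_correct[of r] by linarith
  next
    case False
    with \<open>0 \<le> g\<close> \<open>g < N\<close> \<open>0 < N\<close> show ?thesis
      by (simp add: \<gamma>_def)
  qed
  moreover have "of_int (x ! Suc t) = \<gamma> t + \<gamma> d * real (lam ! t)" if "t < d" for t
    using that by (simp add: \<gamma>_def)
  moreover have "of_int (x ! 0) = (\<Sum>k\<le>d. \<gamma> k)"
  proof -
    have "(\<Sum>k\<le>d. \<gamma> k) = (\<Sum>k<d. of_int (x ! Suc k) - g * real (lam ! k) / N) + g / N"
      by (simp add: \<gamma>_def lessThan_Suc_atMost[symmetric])
    also have "\<dots> = (\<Sum>k<d. of_int (x ! Suc k)) - g * (\<Sum>k<d. real (lam ! k)) / N + g / N"
      by (simp add: sum_subtractf sum_distrib_left sum_divide_distrib)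
    also have "\<dots> = (\<Sum>k<d. of_int (x ! Suc k)) - g"
      using \<open>0 < N\<close> by (simp add: sum_lam field_simps)
    also have "\<dots> = of_int (x ! 0)"
      using len by (simp add: g_def pi_index_conv_nth d_def)
    finally show ?thesis by simp
  qed
  ultimately show "in_Pi lam x"
    using len unfolding in_Pi_def d_def by auto
qed

lemma in_Pi_iff:
  assumes "2 \<le> sum_list lam"
  shows "in_Pi lam x \<longleftrightarrow> length x = Suc (length lam) \<and>
    0 \<le> pi_index x \<and> pi_index x < int (sum_list lam - 1) \<and>
    (\<forall>t<length lam. x ! Suc t = \<lceil>of_int (pi_index x) * real (lam ! t) / real (sum_list lam - 1)\<rceil>)"
  using in_PiD[OF assms] in_PiI[OF assms] by blast

lemma length_pt [simp]: "length (pt lam b) = Suc (length lam)"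
  by (simp add: pt_def Let_def)

lemma pt_nth_Suc:
  "t < length lam \<Longrightarrow> pt lam b ! Suc t = \<lceil>real (b * lam ! t) / real (sum_list lam - 1)\<rceil>"
  by (simp add: pt_def Let_def)

lemma pi_index_pt: "pi_index (pt lam b) = int b"
  by (simp add: pi_index_def pt_def Let_def)

lemma in_Pi_pt:
  assumes "2 \<le> sum_list lam" and "b < sum_list lam - 1"
  shows "in_Pi lam (pt lam b)"
  using assms by (simp add: in_Pi_iff pi_index_pt pt_nth_Suc)

lemma pi_index_map2_minus:
  assumes "length x = Suc d" and "length y = Suc d"
  shows "pi_index (map2 (-) y x) = pi_index y - pi_index x"
  using assms by (simp add: pi_index_conv_nth sum_subtractf)

lemma P_le_pt_iff:
  assumes "2 \<le> sum_list lam" and "i < sum_list lam - 1" and "j < sum_list lam - 1"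
  shows "P_le lam (pt lam i) (pt lam j) \<longleftrightarrow> i \<le> j \<and>
    (\<forall>t<length lam. \<lceil>real (i * lam ! t) / real (sum_list lam - 1)\<rceil>
        + \<lceil>real ((j - i) * lam ! t) / real (sum_list lam - 1)\<rceil>
      = \<lceil>real (j * lam ! t) / real (sum_list lam - 1)\<rceil>)"
proof -
  define D where "D = map2 (-) (pt lam j) (pt lam i)"
  have "length D = Suc (length lam)"
    by (simp add: D_def)
  moreover have "pi_index D = int j - int i"
    using pi_index_map2_minus[of "pt lam i" "length lam" "pt lam j"] by (simp add: D_def pi_index_pt)
  moreover have "D ! Suc t = pt lam j ! Suc t - pt lam i ! Suc t" if "t < length lam" for t
    using that by (simp add: D_def)
  ultimately have "in_Pi lam D \<longleftrightarrow> i \<le> j \<and>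
    (\<forall>t<length lam. pt lam j ! Suc t - pt lam i ! Suc t
       = \<lceil>real ((j - i) * lam ! t) / real (sum_list lam - 1)\<rceil>)"
    using assms by (auto simp: in_Pi_iff)
  moreover have "P_le lam (pt lam i) (pt lam j) \<longleftrightarrow> in_Pi lam D"
    using assms by (simp add: P_le_def D_def in_Pi_pt)
  ultimately show ?thesis
    by (auto simp: pt_nth_Suc algebra_simps)
qed

theorem lemma2p16:
  fixes lam :: "nat list" and d n i j :: nat
  assumes "length lam = d" and "d \<ge> 1"
    and "\<forall>t<d. lam ! t > 0"
    and "sum_list lam = n" and "n \<ge> 2"
    and "i < n - 1" and "j < n - 1" and "i \<noteq> j"
  shows "P_le lam (pt lam i) (pt lam j) \<longleftrightarrow>
    (i < j \<and> (\<forall>t<d.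
       (real (s_coef lam t i) + real (s_coef lam t (j - i)) - real (s_coef lam t j)) / real (n - 1)
       = real_of_int \<lceil>real (s_coef lam t i) / real (n - 1)\<rceil>
         + real_of_int \<lceil>real (s_coef lam t (j - i)) / real (n - 1)\<rceil>
         - real_of_int \<lceil>real (s_coef lam t j) / real (n - 1)\<rceil>))"
proof -
  have ceiling_iff: "\<lceil>real (i * l) / real (n - 1)\<rceil> + \<lceil>real ((j - i) * l) / real (n - 1)\<rceil>
      = \<lceil>real (j * l) / real (n - 1)\<rceil> \<longleftrightarrow>
    (real (i * l mod (n - 1)) + real ((j - i) * l mod (n - 1)) - real (j * l mod (n - 1))) / real (n - 1)
      = real_of_int \<lceil>real (i * l mod (n - 1)) / real (n - 1)\<rceil>
        + real_of_int \<lceil>real ((j - i) * l mod (n - 1)) / real (n - 1)\<rceil>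
        - real_of_int \<lceil>real (j * l mod (n - 1)) / real (n - 1)\<rceil>"
    if "i \<le> j" for l
  proof -
    have "j * l = i * l + (j - i) * l"
      using that by (simp add: diff_mult_distrib)
    then show ?thesis
      using ceiling_add_eq_iff_mod[of "n - 1" "i * l" "(j - i) * l"] assms(5) by simp
  qed
  have "P_le lam (pt lam i) (pt lam j) \<longleftrightarrow> i \<le> j \<and>
    (\<forall>t<d. \<lceil>real (i * lam ! t) / real (n - 1)\<rceil> + \<lceil>real ((j - i) * lam ! t) / real (n - 1)\<rceil>
      = \<lceil>real (j * lam ! t) / real (n - 1)\<rceil>)"
    using P_le_pt_iff[of lam i j] assms(1,4-7) by simp
  then show ?thesis
    using ceiling_iff assms(4,8) by (auto simp: s_coef_def)
qed

end
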